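(* There is $\varepsilon_0>0$ such that for every fixed $\varepsilon\in(0,\varepsilon_0)$ the following holds. Let $p=p(n)$ satisfy $(1-\varepsilon)\log n\le np\le \log n+\log\log n$, and let $G\sim G(n,p)$. For integers $k\ge 0$ let $X_k$ be the number of vertices of degree $k$ in $G$ and $n_k=n\binom{n-1}{k}p^k(1-p)^{n-k-1}$. Let $K_0=K_0(n)\in\{0,1,2\}$ be any choice with $n_{K_0}\to\infty$, and $K_1=\lfloor \log n/10^3\rfloor$. Then a.a.s., for every integer $k\in[K_0,K_1]$, $|X_k-n_k|\le n_k/\log n_k$.
   Context: $G(n,p)$ is the binomial random graph; $\log$ is the natural logarithm; a.a.s. means with probability tending to $1$ as $n\to\infty$. *)

theory Defs
  imports "HOL-Probability.Probability"
begin

text \<open>Binomial random graph G(n,p) on vertex set {0..<n}: a graph is an indicator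
  function on 2-element vertex sets; each of the potential edges is present
  independently with probability p.\<close>

definition pairs :: "nat \<Rightarrow> nat set set" where
  "pairs n = {{i, j} | i j. i < j \<and> j < n}"

definition Gnp :: "nat \<Rightarrow> real \<Rightarrow> (nat set \<Rightarrow> bool) pmf" where
  "Gnp n p = Pi_pmf (pairs n) False (\<lambda>_. bernoulli_pmf p)"

definition degree :: "nat \<Rightarrow> (nat set \<Rightarrow> bool) \<Rightarrow> nat \<Rightarrow> nat" where
  "degree n G v = card {u. u < n \<and> u \<noteq> v \<and> G {u, v}}"

definition num_deg :: "nat \<Rightarrow> (nat set \<Rightarrow> bool) \<Rightarrow> nat \<Rightarrow> nat" where
  "num_deg n G k = card {v. v < n \<and> degree n G v = k}"

definition expdeg :: "nat \<Rightarrow> real \<Rightarrow> nat \<Rightarrow> real" where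
  "expdeg n p k = real n * real ((n - 1) choose k) * p ^ k * (1 - p) ^ (n - k - 1)"

end

theory Submission
  imports Defs "HOL-Real_Asymp.Real_Asymp"
begin

text \<open>Second moment method. \<open>X\<^sub>k\<close> is a sum of \<open>n\<close> indicators of the events
  \<open>deg v = k\<close>, and two of them interact only through the potential edge \<open>uv\<close>. Conditioning on
  that edge shows that, as long as \<open>k\<close> lies below the mode of \<open>Bin(n - 2, p)\<close>,
  \<open>E (X\<^sub>k - n\<^sub>k)\<^sup>2 \<le> n\<^sub>k + 2 p n\<^sub>k\<^sup>2\<close>. Chebyshev's inequality with deviation
  \<open>n\<^sub>k / ln n\<^sub>k\<close> bounds the failure probability for a single \<open>k\<close> by
  \<open>ln\<^sup>2 n\<^sub>k / n\<^sub>k + 2 p ln\<^sup>2 n\<close>. For \<open>K\<^sub>0 \<le> k \<le> ln n / 1000\<close> the ratio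
  \<open>n\<^sub>k\<^sub>+\<^sub>1 / n\<^sub>k\<close> is at least 4, so the first terms sum to \<open>O(1 / \<surd>n\<^sub>K\<^sub>0)\<close>,
  and the second ones to \<open>O(ln\<^sup>4 n / n)\<close>.\<close>

section \<open>Binomial probabilities\<close>

lemma pmf_binomial_Suc_eq:
  assumes "0 \<le> p" "p \<le> 1"
  shows "pmf (binomial_pmf (Suc m) p) k =
    p * (if k = 0 then 0 else pmf (binomial_pmf m p) (k - 1)) + (1 - p) * pmf (binomial_pmf m p) k"
proof (cases k)
  case 0
  then show ?thesis using assms by simp
next
  case (Suc j)
  consider "j < m" | "j = m" | "m < j" by linarith
  then show ?thesis
  proof cases
    case 1
    then have "Suc m - Suc j = Suc (m - Suc j)" "m - j = Suc (m - Suc j)" by auto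
    then show ?thesis using Suc assms by (simp add: algebra_simps)
  qed (use Suc assms in \<open>auto simp: binomial_eq_0\<close>)
qed

lemma pmf_binomial_Suc_ratio:
  assumes "j < N" "0 \<le> p" "p \<le> 1"
  shows "pmf (binomial_pmf N p) (Suc j) * (real (Suc j) * (1 - p)) =
    pmf (binomial_pmf N p) j * (real (N - j) * p)"
proof -
  have "(N - j) * (N choose j) = N * ((N - 1) choose j)"
    by (rule binomial_absorb_comp)
  moreover have "Suc j * (N choose Suc j) = N * ((N - 1) choose (Suc j - 1))"
    by (rule times_binomial_minus1_eq) simp
  ultimately have "(N choose Suc j) * Suc j = (N choose j) * (N - j)"
    by (simp add: mult.commute)
  then have choose: "real (N choose Suc j) * real (Suc j) = real (N choose j) * real (N - j)"
    by (metis of_nat_mult)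
  have "pmf (binomial_pmf N p) (Suc j) * (real (Suc j) * (1 - p)) =
      (real (N choose Suc j) * real (Suc j)) * p ^ Suc j * (1 - p) ^ (N - Suc j) * (1 - p)"
    using assms by (simp add: algebra_simps)
  also have "\<dots> = real (N choose j) * real (N - j) * p ^ Suc j * (1 - p) ^ Suc (N - Suc j)"
    by (simp only: choose power_Suc2 mult.assoc)
  also have "Suc (N - Suc j) = N - j" using assms by simp
  finally show ?thesis
    using assms by (simp add: algebra_simps)
qed

lemma pmf_binomial_le_Suc:
  assumes "j < m" "0 \<le> p" "p \<le> 1" "real (Suc j) * (1 - p) \<le> real (m - j) * p"
  shows "pmf (binomial_pmf m p) j \<le> pmf (binomial_pmf m p) (Suc j)"
proof (cases "p = 0")
  case True
  then show ?thesis using assms(4) by simp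
next
  case False
  then have pos: "0 < real (m - j) * p" using assms by simp
  have "pmf (binomial_pmf m p) j * (real (m - j) * p) =
      pmf (binomial_pmf m p) (Suc j) * (real (Suc j) * (1 - p))"
    using pmf_binomial_Suc_ratio[OF assms(1-3)] by simp
  also have "\<dots> \<le> pmf (binomial_pmf m p) (Suc j) * (real (m - j) * p)"
    using assms(4) by (intro mult_left_mono) simp_all
  finally show ?thesis by (rule mult_right_le_imp_le[OF _ pos])
qed

section \<open>Second moments\<close>

lemma (in prob_space) expectation_sum_indicators_sq:
  fixes A :: "'i \<Rightarrow> 'a set" and q r :: real
  assumes "finite V" "\<And>v. v \<in> V \<Longrightarrow> A v \<in> events" "\<And>v. v \<in> V \<Longrightarrow> prob (A v) = q"
    "\<And>u v. u \<in> V \<Longrightarrow> v \<in> V \<Longrightarrow> u \<noteq> v \<Longrightarrow> prob (A u \<inter> A v) = r"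
  shows "expectation (\<lambda>x. ((\<Sum>v\<in>V. indicator (A v) x) - card V * q)\<^sup>2) =
    card V * q + card V * (card V - 1) * r - (card V * q)\<^sup>2"
proof -
  let ?c = "card V * q"
  have int: "integrable M (indicator E :: 'a \<Rightarrow> real)" if "E \<in> events" for E
    using that by (auto intro!: integrable_real_indicator simp: less_top[symmetric])
  have sq: "((\<Sum>v\<in>V. indicator (A v) x :: real) - ?c)\<^sup>2 =
      (\<Sum>u\<in>V. \<Sum>v\<in>V. indicator (A u \<inter> A v) x) - 2 * ?c * (\<Sum>v\<in>V. indicator (A v) x) + ?c\<^sup>2" for x
  proof -
    have "(\<Sum>u\<in>V. \<Sum>v\<in>V. indicator (A u \<inter> A v) x) = (\<Sum>v\<in>V. indicator (A v) x :: real)\<^sup>2"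
      by (simp add: indicator_inter_arith power2_eq_square sum_product)
    then show ?thesis unfolding power2_diff by simp
  qed
  have pair_sum: "(\<Sum>v\<in>V. prob (A u \<inter> A v)) = q + (card V - 1) * r" if "u \<in> V" for u
  proof -
    have "(\<Sum>v\<in>V. prob (A u \<inter> A v)) = prob (A u \<inter> A u) + (\<Sum>v\<in>V - {u}. prob (A u \<inter> A v))"
      using assms(1) that by (simp add: sum.remove)
    also have "(\<Sum>v\<in>V - {u}. prob (A u \<inter> A v)) = (\<Sum>v\<in>V - {u}. r)"
      by (rule sum.cong) (use assms(4) that in auto)
    finally show ?thesis using assms(1,3) that by simp
  qed
  have "expectation (\<lambda>x. ((\<Sum>v\<in>V. indicator (A v) x) - ?c)\<^sup>2) =
      (\<Sum>u\<in>V. \<Sum>v\<in>V. prob (A u \<inter> A v)) - 2 * ?c * (\<Sum>v\<in>V. prob (A v)) + ?c\<^sup>2"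
    unfolding sq using assms(2)
    by (simp add: int Bochner_Integration.integral_sum integrable_sum sets.Int prob_space)
  also have "\<dots> = card V * (q + (card V - 1) * r) - 2 * ?c * ?c + ?c\<^sup>2"
    using assms(3) pair_sum by simp
  finally show ?thesis
    using assms(1) by (cases "card V") (simp_all add: power2_eq_square algebra_simps)
qed

lemma two_point_variance_le:
  fixes p a b :: real
  assumes "0 \<le> p" "p \<le> 1/2" "0 \<le> a" "a \<le> b"
  shows "p * a\<^sup>2 + (1 - p) * b\<^sup>2 - (p * a + (1 - p) * b)\<^sup>2 \<le> 2 * p * (p * a + (1 - p) * b)\<^sup>2"
proof -
  have "p * a\<^sup>2 + (1 - p) * b\<^sup>2 - (p * a + (1 - p) * b)\<^sup>2 = p * (1 - p) * (b - a)\<^sup>2"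
    by (simp add: power2_eq_square algebra_simps)
  also have "\<dots> \<le> p * (1 - p) * b\<^sup>2"
    using assms by (intro mult_left_mono power_mono) auto
  also have "\<dots> \<le> 2 * p * ((1 - p) * b)\<^sup>2"
  proof -
    have "1 \<le> 2 * (1 - p)" "0 \<le> p * (1 - p) * b\<^sup>2" using assms by simp_all
    then have "p * (1 - p) * b\<^sup>2 \<le> p * (1 - p) * b\<^sup>2 * (2 * (1 - p))"
      by (metis mult_left_mono mult.right_neutral)
    then show ?thesis by (simp add: power2_eq_square algebra_simps)
  qed
  also have "\<dots> \<le> 2 * p * (p * a + (1 - p) * b)\<^sup>2"
    using assms by (intro mult_left_mono power_mono) auto
  finally show ?thesis .
qed

section \<open>Counting the true coordinates of a Bernoulli product\<close>

definition num_true :: "'a set \<Rightarrow> ('a \<Rightarrow> bool) \<Rightarrow> nat" where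
  "num_true S G = card {e \<in> S. G e}"

lemma num_true_restrict:
  "S \<subseteq> J \<Longrightarrow> num_true S (\<lambda>x. if x \<in> J then G x else False) = num_true S G"
  unfolding num_true_def by (rule arg_cong[where f = card]) auto

lemma num_true_insert_upd:
  assumes "finite S" "e \<notin> S" "\<And>x. x \<in> S \<Longrightarrow> G x = H x"
  shows "num_true (insert e S) (G(e := y)) = num_true S H + of_bool y"
proof -
  have "{x \<in> insert e S. (G(e := y)) x} = {x \<in> S. H x} \<union> (if y then {e} else {})"
    using assms by auto
  then show ?thesis
    using assms unfolding num_true_def by (auto simp: card_insert_if)
qed

lemma map_pmf_Pi_pmf_restrict:
  assumes "finite I" "J \<subseteq> I" "\<And>G. f (\<lambda>x. if x \<in> J then G x else d) = f G"
  shows "map_pmf f (Pi_pmf I d B) = map_pmf f (Pi_pmf J d B)"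
  by (simp add: Pi_pmf_subset[OF assms(1,2)] pmf.map_comp o_def assms(3))

lemma map_num_true_Pi_bernoulli:
  assumes "finite I" "S \<subseteq> I" "0 \<le> p" "p \<le> 1"
  shows "map_pmf (num_true S) (Pi_pmf I False (\<lambda>_. bernoulli_pmf p)) = binomial_pmf (card S) p"
proof -
  have "finite S" using assms finite_subset by blast
  then have "binomial_pmf (card S) p = map_pmf (num_true S) (Pi_pmf S False (\<lambda>_. bernoulli_pmf p))"
    using assms by (simp add: binomial_pmf_altdef' num_true_def[abs_def])
  moreover have "map_pmf (num_true S) (Pi_pmf I False (\<lambda>_. bernoulli_pmf p)) =
      map_pmf (num_true S) (Pi_pmf S False (\<lambda>_. bernoulli_pmf p))"
    by (rule map_pmf_Pi_pmf_restrict[OF assms(1,2)]) (simp add: num_true_restrict)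
  ultimately show ?thesis by simp
qed

lemma Pi_pmf_insert_union:
  assumes "finite S" "finite T" "S \<inter> T = {}" "e \<notin> S \<union> T"
  shows "Pi_pmf (insert e (S \<union> T)) d B =
    map_pmf (\<lambda>(y, f, g). (\<lambda>x. if x \<in> S then f x else g x)(e := y))
      (pair_pmf (B e) (pair_pmf (Pi_pmf S d B) (Pi_pmf T d B)))"
  using assms
  by (simp add: Pi_pmf_insert Pi_pmf_union pair_map_pmf2 pmf.map_comp o_def apsnd_def map_prod_def
      case_prod_unfold)

lemma map_pmf_pair_pair:
  "map_pmf (\<lambda>(y, f, g). (y, F f, G g)) (pair_pmf A (pair_pmf B C)) =
    pair_pmf A (pair_pmf (map_pmf F B) (map_pmf G C))"
proof -
  have "pair_pmf (map_pmf F B) (map_pmf G C) = map_pmf (\<lambda>(f, g). (F f, G g)) (pair_pmf B C)"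
    by (rule map_pair[symmetric])
  then show ?thesis
    by (simp only: pair_map_pmf2 pmf.map_comp)
      (intro map_pmf_cong refl, auto simp: apsnd_def map_prod_def split_def)
qed

lemma map_num_true_pair_Pi_bernoulli:
  assumes "finite I" "S \<subseteq> I" "T \<subseteq> I" "S \<inter> T = {e}" "0 \<le> p" "p \<le> 1"
  shows "map_pmf (\<lambda>G. (num_true S G, num_true T G)) (Pi_pmf I False (\<lambda>_. bernoulli_pmf p)) =
    map_pmf (\<lambda>(y, a, b). (a + of_bool y, b + of_bool y))
      (pair_pmf (bernoulli_pmf p) (pair_pmf (binomial_pmf (card S - 1) p) (binomial_pmf (card T - 1) p)))"
proof -
  define S' where "S' = S - {e}"
  define T' where "T' = T - {e}"
  define B where "B = (\<lambda>_::'a. bernoulli_pmf p)"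
  let ?counts = "\<lambda>G. (num_true S G, num_true T G)"
  have fin: "finite S'" "finite T'"
    using assms finite_subset unfolding S'_def T'_def by auto
  have disj: "S' \<inter> T' = {}" "e \<notin> S' \<union> T'"
    using assms unfolding S'_def T'_def by auto
  have ST: "S = insert e S'" "T = insert e T'"
    using assms unfolding S'_def T'_def by auto
  have card': "card S' = card S - 1" "card T' = card T - 1"
    using assms unfolding S'_def T'_def by (auto simp: card_Diff_singleton_if)
  have merge:
    "num_true S ((\<lambda>x. if x \<in> S' then f x else g x)(e := y)) = num_true S' f + of_bool y"
    "num_true T ((\<lambda>x. if x \<in> S' then f x else g x)(e := y)) = num_true T' g + of_bool y"
    for f g y
    unfolding ST by (rule num_true_insert_upd; use fin disj in auto)+
  have "map_pmf ?counts (Pi_pmf I False B) = map_pmf ?counts (Pi_pmf (insert e (S' \<union> T')) False B)"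
  proof (rule map_pmf_Pi_pmf_restrict)
    show "insert e (S' \<union> T') \<subseteq> I" using assms ST by auto
    have "S \<subseteq> insert e (S' \<union> T')" "T \<subseteq> insert e (S' \<union> T')" using ST by auto
    then show "?counts (\<lambda>x. if x \<in> insert e (S' \<union> T') then G x else False) = ?counts G" for G
      by (simp only: num_true_restrict)
  qed fact
  also have "\<dots> = map_pmf (\<lambda>(y, a, b). (a + of_bool y, b + of_bool y))
      (map_pmf (\<lambda>(y, f, g). (y, num_true S' f, num_true T' g))
        (pair_pmf (B e) (pair_pmf (Pi_pmf S' False B) (Pi_pmf T' False B))))"
    unfolding Pi_pmf_insert_union[OF fin disj] pmf.map_comp o_def
    by (intro map_pmf_cong refl) (simp only: case_prod_unfold merge fst_conv snd_conv)
  also have "\<dots> = map_pmf (\<lambda>(y, a, b). (a + of_bool y, b + of_bool y))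
      (pair_pmf (B e) (pair_pmf (map_pmf (num_true S') (Pi_pmf S' False B))
        (map_pmf (num_true T') (Pi_pmf T' False B))))"
    by (simp only: map_pmf_pair_pair)
  finally show ?thesis
    using fin assms unfolding B_def card'[symmetric] by (simp add: map_num_true_Pi_bernoulli)
qed

lemma pmf_bernoulli_shift_diag:
  fixes X Y :: "nat pmf"
  assumes "0 \<le> p" "p \<le> 1"
  shows "pmf (map_pmf (\<lambda>(y, a, b). (a + of_bool y, b + of_bool y))
      (pair_pmf (bernoulli_pmf p) (pair_pmf X Y))) (k, k) =
    p * (if k = 0 then 0 else pmf X (k - 1) * pmf Y (k - 1)) + (1 - p) * (pmf X k * pmf Y k)"
proof -
  define h where "h = (\<lambda>y (a :: nat, b :: nat). (a + of_bool y, b + of_bool y))"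
  have "map_pmf (\<lambda>(y, a, b). (a + of_bool y, b + of_bool y)) (pair_pmf (bernoulli_pmf p) (pair_pmf X Y))
      = bind_pmf (bernoulli_pmf p) (\<lambda>y. map_pmf (h y) (pair_pmf X Y))"
    unfolding pair_pmf_def[of "bernoulli_pmf p"] map_bind_pmf h_def
    by (intro bind_pmf_cong refl) (simp add: map_pmf_def bind_assoc_pmf bind_return_pmf case_prod_beta)
  then have split: "pmf (map_pmf (\<lambda>(y, a, b). (a + of_bool y, b + of_bool y))
      (pair_pmf (bernoulli_pmf p) (pair_pmf X Y))) (k, k) =
      p * pmf (map_pmf (h True) (pair_pmf X Y)) (k, k) + (1 - p) * pmf (map_pmf (h False) (pair_pmf X Y)) (k, k)"
    using assms by (simp add: pmf_bind)
  have "h False = id" unfolding h_def by auto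
  moreover have "pmf (map_pmf (h True) (pair_pmf X Y)) (k, k) = (if k = 0 then 0 else pmf X (k - 1) * pmf Y (k - 1))"
  proof (cases k)
    case 0
    then show ?thesis by (subst pmf_map_outside) (auto simp: h_def)
  next
    case (Suc j)
    have "inj (h True)" unfolding h_def inj_def by auto
    then have "pmf (map_pmf (h True) (pair_pmf X Y)) (h True (j, j)) = pmf (pair_pmf X Y) (j, j)"
      by (rule pmf_map_inj')
    then show ?thesis using Suc by (simp add: h_def pmf_pair)
  qed
  ultimately show ?thesis unfolding split by (simp add: pmf_pair)
qed

section \<open>Vertex degrees in G(n,p)\<close>

definition incident_pairs :: "nat \<Rightarrow> nat \<Rightarrow> nat set set" where
  "incident_pairs n v = (\<lambda>u. {u, v}) ` {u. u < n \<and> u \<noteq> v}"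

lemma inj_on_doubleton: "inj_on (\<lambda>u. {u, v}) A"
  unfolding inj_on_def by (auto simp: doubleton_eq_iff)

lemma degree_eq_num_true: "degree n G v = num_true (incident_pairs n v) G"
proof -
  have "{e \<in> incident_pairs n v. G e} = (\<lambda>u. {u, v}) ` {u. u < n \<and> u \<noteq> v \<and> G {u, v}}"
    unfolding incident_pairs_def by auto
  then show ?thesis
    unfolding degree_def num_true_def by (simp add: card_image[OF inj_on_doubleton])
qed

lemma finite_pairs: "finite (pairs n)"
  by (rule finite_subset[of _ "Pow {..<n}"]) (auto simp: pairs_def)

lemma incident_pairs_subset: "v < n \<Longrightarrow> incident_pairs n v \<subseteq> pairs n"
  unfolding incident_pairs_def pairs_def by clarify (metis insert_commute linorder_neqE_nat)

lemma card_incident_pairs: "v < n \<Longrightarrow> card (incident_pairs n v) = n - 1"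
proof -
  assume "v < n"
  moreover have "{u. u < n \<and> u \<noteq> v} = {..<n} - {v}" by auto
  ultimately show ?thesis
    unfolding incident_pairs_def by (simp add: card_image[OF inj_on_doubleton])
qed

lemma incident_pairs_inter:
  "u \<noteq> v \<Longrightarrow> u < n \<Longrightarrow> v < n \<Longrightarrow> incident_pairs n u \<inter> incident_pairs n v = {{u, v}}"
  unfolding incident_pairs_def by (auto simp: doubleton_eq_iff insert_commute)

lemma prob_degree_eq:
  assumes "v < n" "0 \<le> p" "p \<le> 1"
  shows "measure_pmf.prob (Gnp n p) {G. degree n G v = k} = pmf (binomial_pmf (n - 1) p) k"
proof -
  have "measure_pmf.prob (Gnp n p) {G. degree n G v = k} =
      pmf (map_pmf (num_true (incident_pairs n v)) (Gnp n p)) k"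
    by (simp add: pmf_map degree_eq_num_true vimage_def)
  then show ?thesis
    using map_num_true_Pi_bernoulli[OF finite_pairs incident_pairs_subset[OF assms(1)] assms(2,3)]
    by (simp add: Gnp_def card_incident_pairs[OF assms(1)])
qed

lemma prob_degree_eq_both:
  assumes "u \<noteq> v" "u < n" "v < n" "0 \<le> p" "p \<le> 1"
  shows "measure_pmf.prob (Gnp n p) {G. degree n G u = k \<and> degree n G v = k} =
    p * (if k = 0 then 0 else pmf (binomial_pmf (n - 2) p) (k - 1) ^ 2) +
    (1 - p) * pmf (binomial_pmf (n - 2) p) k ^ 2"
proof -
  let ?f = "\<lambda>G. (num_true (incident_pairs n u) G, num_true (incident_pairs n v) G)"
  have "measure_pmf.prob (Gnp n p) {G. degree n G u = k \<and> degree n G v = k} =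
      pmf (map_pmf ?f (Gnp n p)) (k, k)"
    by (simp add: pmf_map degree_eq_num_true vimage_def)
  also have "map_pmf ?f (Gnp n p) = map_pmf (\<lambda>(y, a, b). (a + of_bool y, b + of_bool y))
      (pair_pmf (bernoulli_pmf p) (pair_pmf (binomial_pmf (n - 2) p) (binomial_pmf (n - 2) p)))"
  proof -
    have "card (incident_pairs n w) - 1 = n - 2" if "w < n" for w
      using card_incident_pairs[OF that] by simp
    then show ?thesis
      using map_num_true_pair_Pi_bernoulli[OF finite_pairs incident_pairs_subset[OF assms(2)]
          incident_pairs_subset[OF assms(3)] incident_pairs_inter[OF assms(1-3)] assms(4,5)]
      by (simp only: Gnp_def assms(2,3))
  qed
  finally show ?thesis
    by (simp add: pmf_bernoulli_shift_diag assms(4,5) power2_eq_square del: pmf_binomial)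
qed

lemma finite_set_pmf_Gnp: "finite (set_pmf (Gnp n p))"
proof -
  have "set_pmf (Gnp n p) \<subseteq> {G. \<forall>e. e \<notin> pairs n \<longrightarrow> G e = False}"
    unfolding Gnp_def by (rule set_Pi_pmf_subset[OF finite_pairs])
  also have "\<dots> \<subseteq> (\<lambda>E e. e \<in> E) ` Pow (pairs n)"
  proof
    fix G assume "G \<in> {G. \<forall>e. e \<notin> pairs n \<longrightarrow> G e = False}"
    then have "G = (\<lambda>e. e \<in> {e \<in> pairs n. G e})" by auto
    then show "G \<in> (\<lambda>E e. e \<in> E) ` Pow (pairs n)" by blast
  qed
  finally show ?thesis using finite_pairs by (meson finite_Pow_iff finite_imageI finite_subset)
qed

lemma num_deg_eq_sum_indicator: "real (num_deg n G k) = (\<Sum>v<n. indicator {G. degree n G v = k} G)"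
proof -
  have "num_deg n G k = card ({..<n} \<inter> {v. degree n G v = k})"
    unfolding num_deg_def by (rule arg_cong[where f = card]) auto
  then show ?thesis by (simp add: indicator_def sum.If_cases)
qed

lemma expdeg_eq_pmf:
  "0 \<le> p \<Longrightarrow> p \<le> 1 \<Longrightarrow> expdeg n p k = real n * pmf (binomial_pmf (n - 1) p) k"
  unfolding expdeg_def by (simp add: diff_commute)

lemma expectation_num_deg_dev_sq:
  fixes n k :: nat
  assumes "0 \<le> p" "p \<le> 1" "2 \<le> n"
  defines "J \<equiv> p * (if k = 0 then 0 else pmf (binomial_pmf (n - 2) p) (k - 1) ^ 2) +
      (1 - p) * pmf (binomial_pmf (n - 2) p) k ^ 2"
  shows "measure_pmf.expectation (Gnp n p) (\<lambda>G. (real (num_deg n G k) - expdeg n p k)\<^sup>2) =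
    expdeg n p k + real n * (real n - 1) * J - (expdeg n p k)\<^sup>2"
proof -
  let ?A = "\<lambda>v. {G. degree n G v = k}"
  have "measure_pmf.prob (Gnp n p) (?A u \<inter> ?A v) = J" if "u < n" "v < n" "u \<noteq> v" for u v
    using prob_degree_eq_both[OF that(3,1,2) assms(1,2)] unfolding J_def Collect_conj_eq[symmetric] .
  then have "measure_pmf.expectation (Gnp n p)
      (\<lambda>G. ((\<Sum>v<n. indicator (?A v) G) - real n * pmf (binomial_pmf (n - 1) p) k)\<^sup>2)
    = real n * pmf (binomial_pmf (n - 1) p) k + real n * (real n - 1) * J
      - (real n * pmf (binomial_pmf (n - 1) p) k)\<^sup>2"
    using measure_pmf.expectation_sum_indicators_sq[of "{..<n}" ?A "Gnp n p" "pmf (binomial_pmf (n - 1) p) k" J]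
      prob_degree_eq[OF _ assms(1,2)] assms(3)
    by (simp add: of_nat_diff del: pmf_binomial)
  then show ?thesis
    by (simp add: num_deg_eq_sum_indicator expdeg_eq_pmf assms(1,2) del: pmf_binomial)
qed

lemma expectation_num_deg_dev_sq_le:
  fixes n k :: nat
  assumes "0 \<le> p" "p \<le> 1/2" "2 \<le> n" "k \<le> n - 2" "real k * (1 - p) \<le> real (n - 1 - k) * p"
  shows "measure_pmf.expectation (Gnp n p) (\<lambda>G. (real (num_deg n G k) - expdeg n p k)\<^sup>2)
    \<le> expdeg n p k + 2 * p * (expdeg n p k)\<^sup>2"
proof -
  define a where "a = (if k = 0 then 0 else pmf (binomial_pmf (n - 2) p) (k - 1))"
  define b where "b = pmf (binomial_pmf (n - 2) p) k"
  define q where "q = p * a + (1 - p) * b"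
  have "n - 1 = Suc (n - 2)" using assms by simp
  then have mu: "expdeg n p k = real n * q"
    unfolding q_def a_def b_def using assms
    by (simp add: expdeg_eq_pmf pmf_binomial_Suc_eq del: pmf_binomial)
  \<comment> \<open>\<open>k\<close> lies below the mode of \<open>Bin(n - 2, p)\<close>\<close>
  have "a \<le> b"
  proof (cases k)
    case 0
    then show ?thesis by (simp add: a_def b_def)
  next
    case (Suc j)
    moreover have "n - 1 - k = n - 2 - j" using Suc by simp
    ultimately show ?thesis
      unfolding a_def b_def using pmf_binomial_le_Suc[of j "n - 2" p] assms
      by (simp del: pmf_binomial)
  qed
  then have var: "p * a\<^sup>2 + (1 - p) * b\<^sup>2 - q\<^sup>2 \<le> 2 * p * q\<^sup>2"
    unfolding q_def using assms a_def by (intro two_point_variance_le) auto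
  have q0: "0 \<le> q" using assms by (simp add: q_def a_def b_def del: pmf_binomial)
  have "measure_pmf.expectation (Gnp n p) (\<lambda>G. (real (num_deg n G k) - expdeg n p k)\<^sup>2) =
      real n * q + real n * (real n - 1) * (p * a\<^sup>2 + (1 - p) * b\<^sup>2) - (real n * q)\<^sup>2"
    using expectation_num_deg_dev_sq[of p n k] assms unfolding mu
    by (simp add: a_def b_def del: pmf_binomial)
  also have "\<dots> \<le> real n * q + real n * (real n - 1) * (p * a\<^sup>2 + (1 - p) * b\<^sup>2 - q\<^sup>2)"
    using q0 by (simp add: power2_eq_square algebra_simps)
  also have "\<dots> \<le> real n * q + real n * (real n - 1) * (2 * p * q\<^sup>2)"
    using var assms by (intro add_left_mono mult_left_mono) auto
  also have "\<dots> \<le> real n * q + real n * real n * (2 * p * q\<^sup>2)"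
    using assms by (intro add_left_mono mult_right_mono) auto
  also have "\<dots> = expdeg n p k + 2 * p * (expdeg n p k)\<^sup>2"
    unfolding mu by (simp add: power2_eq_square)
  finally show ?thesis .
qed

lemma prob_num_deg_deviation_le:
  fixes n k :: nat
  assumes "0 \<le> p" "p \<le> 1/2" "2 \<le> n" "k \<le> n - 2" "real k * (1 - p) \<le> real (n - 1 - k) * p"
    and "0 < t"
  shows "measure_pmf.prob (Gnp n p) {G. t < \<bar>real (num_deg n G k) - expdeg n p k\<bar>}
    \<le> (expdeg n p k + 2 * p * (expdeg n p k)\<^sup>2) / t\<^sup>2"
proof -
  let ?u = "\<lambda>G. (real (num_deg n G k) - expdeg n p k)\<^sup>2"
  have "measure_pmf.prob (Gnp n p) {G. t < \<bar>real (num_deg n G k) - expdeg n p k\<bar>}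
      \<le> measure_pmf.prob (Gnp n p) {G \<in> space (Gnp n p). t\<^sup>2 \<le> ?u G}"
    using \<open>0 < t\<close> by (intro measure_pmf.finite_measure_mono) (auto simp flip: abs_le_square_iff)
  also have "\<dots> \<le> measure_pmf.expectation (Gnp n p) ?u / t\<^sup>2"
    using \<open>0 < t\<close>
    by (intro integral_Markov_inequality_measure integrable_measure_pmf_finite finite_set_pmf_Gnp) auto
  also have "\<dots> \<le> (expdeg n p k + 2 * p * (expdeg n p k)\<^sup>2) / t\<^sup>2"
    using assms by (intro divide_right_mono expectation_num_deg_dev_sq_le) auto
  finally show ?thesis .
qed

section \<open>Expected degree counts in the logarithmic regime\<close>

lemma ln_sq_div_le:
  fixes x :: real
  assumes "1 \<le> x"
  shows "(ln x)\<^sup>2 / x \<le> 16 / sqrt x"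
proof -
  have "ln x = 4 * ln (sqrt (sqrt x))" using assms by (simp add: ln_sqrt)
  also have "\<dots> \<le> 4 * sqrt (sqrt x)" using ln_le_minus_one[of "sqrt (sqrt x)"] assms by simp
  finally have "(ln x)\<^sup>2 \<le> (4 * sqrt (sqrt x))\<^sup>2" using assms by (intro power_mono) auto
  then have "(ln x)\<^sup>2 \<le> 16 * sqrt x" using assms by (simp add: power_mult_distrib)
  then have "(ln x)\<^sup>2 / x \<le> 16 * sqrt x / x" using assms by (simp add: divide_right_mono)
  also have "16 * sqrt x / x = 16 / sqrt x"
    using assms by (simp add: field_simps flip: real_sqrt_mult)
  finally show ?thesis .
qed

lemma sum_half_power_le_2: "(\<Sum>k\<in>{a..b}. (1/2 :: real) ^ (k - a)) \<le> 2"
proof -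
  have "(\<Sum>k\<in>{a..b}. (1/2 :: real) ^ (k - a)) = (\<Sum>i\<in>(\<lambda>k. k - a) ` {a..b}. (1/2) ^ i)"
    by (rule sum.reindex[symmetric, unfolded o_def]) (auto simp: inj_on_def)
  also have "\<dots> < 1 / (1 - 1/2)" by (rule geometric_sum_less) auto
  finally show ?thesis by simp
qed

locale log_density =
  fixes n :: nat and p :: real
  assumes two_le_n: "2 \<le> n"
    and one_le_ln: "1 \<le> ln (real n)"
    and np_lower: "ln (real n) / 2 \<le> real n * p"
    and np_upper: "real n * p \<le> 2 * ln (real n)"
    and p_le_half: "p \<le> 1/2"
    and n_large: "ln (real n) / 1000 + 1 \<le> real n / 2"
begin

abbreviation L :: real where "L \<equiv> ln (real n)"

lemma p_nonneg: "0 \<le> p"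
proof -
  have "0 \<le> real n * p" using np_lower one_le_ln by linarith
  then show ?thesis using two_le_n by (simp add: zero_le_mult_iff)
qed

lemma below_range:
  assumes "real k \<le> L / 1000"
  shows "k \<le> n - 2" "L / 4 \<le> real (n - 1 - k) * p"
proof -
  have "real k + 1 \<le> real n / 2" using assms n_large by linarith
  then have "k + 1 < n" and half: "real n / 2 \<le> real (n - 1 - k)" using two_le_n by (auto simp: of_nat_diff)
  then show "k \<le> n - 2" by simp
  have "real n / 2 * p \<le> real (n - 1 - k) * p" using half p_nonneg by (rule mult_right_mono)
  then show "L / 4 \<le> real (n - 1 - k) * p" using np_lower by simp
qed

lemma expdeg_Suc_ge:
  assumes "real (Suc k) \<le> L / 1000"
  shows "4 * expdeg n p k \<le> expdeg n p (Suc k)"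
proof -
  have k: "real k \<le> L / 1000" using assms by simp
  have "k < n - 1" using below_range(1)[OF k] two_le_n by linarith
  then have ratio: "expdeg n p (Suc k) * (real (Suc k) * (1 - p)) = expdeg n p k * (real (n - 1 - k) * p)"
    using pmf_binomial_Suc_ratio[of k "n - 1" p] p_nonneg p_le_half
    by (simp add: expdeg_eq_pmf mult.assoc del: pmf_binomial)
  have nonneg: "0 \<le> expdeg n p k" "0 \<le> expdeg n p (Suc k)"
    using p_nonneg p_le_half by (simp_all add: expdeg_eq_pmf del: pmf_binomial)
  have "expdeg n p k * (L / 4) \<le> expdeg n p k * (real (n - 1 - k) * p)"
    using below_range(2)[OF k] nonneg by (intro mult_left_mono)
  also have "\<dots> \<le> expdeg n p (Suc k) * (L / 1000)"
  proof -
    have "real (Suc k) * (1 - p) \<le> L / 1000"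
      using assms p_nonneg mult_left_le[of "1 - p" "real (Suc k)"] by linarith
    then show ?thesis unfolding ratio[symmetric] using nonneg by (intro mult_left_mono)
  qed
  finally show ?thesis using one_le_ln nonneg by (simp add: algebra_simps)
qed

lemma expdeg_ge_geometric:
  assumes "K0 \<le> k" "real k \<le> L / 1000"
  shows "4 ^ (k - K0) * expdeg n p K0 \<le> expdeg n p k"
  using assms(1)
proof (induction k rule: dec_induct)
  case base
  then show ?case by simp
next
  case (step k)
  then have "4 ^ (Suc k - K0) * expdeg n p K0 \<le> 4 * expdeg n p k"
    by (simp add: Suc_diff_le)
  also have "\<dots> \<le> expdeg n p (Suc k)"
    using step.hyps(2) assms(2) by (intro expdeg_Suc_ge) linarith
  finally show ?case .
qed

lemma prob_deviation_le:
  assumes "real k \<le> L / 1000" "2 \<le> expdeg n p k"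
  shows "measure_pmf.prob (Gnp n p)
      {G. expdeg n p k / ln (expdeg n p k) < \<bar>real (num_deg n G k) - expdeg n p k\<bar>}
    \<le> 16 / sqrt (expdeg n p k) + 2 * p * L\<^sup>2"
proof -
  define \<mu> where "\<mu> = expdeg n p k"
  have ln_pos: "0 < ln \<mu>" using assms(2) unfolding \<mu>_def by simp
  have "\<mu> \<le> real n"
    using pmf_le_1[of "binomial_pmf (n - 1) p" k] p_nonneg p_le_half
    unfolding \<mu>_def by (simp add: expdeg_eq_pmf mult_left_le del: pmf_binomial)
  then have ln_le: "ln \<mu> \<le> L" using assms(2) unfolding \<mu>_def by simp
  have mode: "real k * (1 - p) \<le> real (n - 1 - k) * p"
    using below_range(2)[OF assms(1)] assms(1) one_le_ln p_nonneg mult_left_le[of "1 - p" "real k"]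
    by linarith
  have "measure_pmf.prob (Gnp n p) {G. \<mu> / ln \<mu> < \<bar>real (num_deg n G k) - \<mu>\<bar>}
      \<le> (\<mu> + 2 * p * \<mu>\<^sup>2) / (\<mu> / ln \<mu>)\<^sup>2"
    unfolding \<mu>_def using p_nonneg p_le_half two_le_n below_range(1)[OF assms(1)] mode ln_pos assms(2)
    by (intro prob_num_deg_deviation_le) (auto simp: \<mu>_def)
  also have "\<dots> = (ln \<mu>)\<^sup>2 / \<mu> + 2 * p * (ln \<mu>)\<^sup>2"
    using ln_pos assms(2) unfolding \<mu>_def by (simp add: field_simps power2_eq_square)
  also have "\<dots> \<le> 16 / sqrt \<mu> + 2 * p * L\<^sup>2"
    using assms(2) ln_pos ln_le p_nonneg unfolding \<mu>_def
    by (intro add_mono ln_sq_div_le mult_left_mono power_mono) auto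
  finally show ?thesis unfolding \<mu>_def .
qed

lemma inverse_sqrt_expdeg_le:
  assumes "K0 \<le> k" "real k \<le> L / 1000" "0 < expdeg n p K0"
  shows "1 / sqrt (expdeg n p k) \<le> (1/2) ^ (k - K0) / sqrt (expdeg n p K0)"
proof -
  have "2 ^ (k - K0) * sqrt (expdeg n p K0) = sqrt (4 ^ (k - K0) * expdeg n p K0)"
    by (simp add: real_sqrt_mult real_sqrt_power)
  also have "\<dots> \<le> sqrt (expdeg n p k)"
    using expdeg_ge_geometric[OF assms(1,2)] by simp
  finally have le: "2 ^ (k - K0) * sqrt (expdeg n p K0) \<le> sqrt (expdeg n p k)" .
  have pos: "0 < 2 ^ (k - K0) * sqrt (expdeg n p K0)" using assms(3) by simp
  then have "0 < sqrt (expdeg n p k)" using le by linarith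
  then have "1 / sqrt (expdeg n p k) \<le> 1 / (2 ^ (k - K0) * sqrt (expdeg n p K0))"
    using le pos by (intro divide_left_mono) auto
  then show ?thesis by (simp add: power_one_over)
qed

abbreviation K1 :: nat where "K1 \<equiv> nat \<lfloor>L / 10^3\<rfloor>"

lemma K1_le: "real K1 \<le> L / 1000"
  using one_le_ln of_int_floor_le[of "L / 1000"] by simp

lemma sum_deviation_bounds_le:
  assumes "0 < expdeg n p K0"
  shows "(\<Sum>k\<in>{K0..K1}. 16 / sqrt (expdeg n p k) + 2 * p * L\<^sup>2)
    \<le> 32 / sqrt (expdeg n p K0) + 4 * (L + 1) * L ^ 3 / real n"
proof -
  have "(\<Sum>k\<in>{K0..K1}. 16 / sqrt (expdeg n p k) + 2 * p * L\<^sup>2)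
      \<le> (\<Sum>k\<in>{K0..K1}. 16 / sqrt (expdeg n p K0) * (1/2) ^ (k - K0) + 2 * p * L\<^sup>2)"
  proof (intro sum_mono add_right_mono)
    fix k assume "k \<in> {K0..K1}"
    then have "1 / sqrt (expdeg n p k) \<le> (1/2) ^ (k - K0) / sqrt (expdeg n p K0)"
      using K1_le assms by (intro inverse_sqrt_expdeg_le) (auto intro: order_trans[rotated])
    from mult_left_mono[OF this, of 16]
    show "16 / sqrt (expdeg n p k) \<le> 16 / sqrt (expdeg n p K0) * (1/2) ^ (k - K0)" by simp
  qed
  also have "\<dots> = 16 / sqrt (expdeg n p K0) * (\<Sum>k\<in>{K0..K1}. (1/2) ^ (k - K0))
      + real (card {K0..K1}) * (2 * p * L\<^sup>2)"
    by (simp add: sum.distrib sum_distrib_left)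
  also have "\<dots> \<le> 16 / sqrt (expdeg n p K0) * 2 + (L + 1) * (2 * (2 * L / real n) * L\<^sup>2)"
  proof (rule add_mono)
    show "16 / sqrt (expdeg n p K0) * (\<Sum>k\<in>{K0..K1}. (1/2) ^ (k - K0)) \<le> 16 / sqrt (expdeg n p K0) * 2"
      using assms sum_half_power_le_2 by (intro mult_left_mono) auto
    have "real (card {K0..K1}) \<le> L + 1" using K1_le by simp
    moreover have "2 * p * L\<^sup>2 \<le> 2 * (2 * L / real n) * L\<^sup>2"
      using np_upper two_le_n by (intro mult_right_mono) (auto simp: field_simps)
    ultimately show "real (card {K0..K1}) * (2 * p * L\<^sup>2) \<le> (L + 1) * (2 * (2 * L / real n) * L\<^sup>2)"
      by (rule mult_mono) (use p_nonneg one_le_ln in auto)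
  qed
  finally show ?thesis
    by (simp add: power2_eq_square power3_eq_cube field_simps)
qed

lemma prob_num_deg_concentrated:
  assumes "2 \<le> expdeg n p K0"
  shows "1 - (32 / sqrt (expdeg n p K0) + 4 * (L + 1) * L ^ 3 / real n)
    \<le> measure_pmf.prob (Gnp n p) {G. \<forall>k \<in> {K0..K1}.
        \<bar>real (num_deg n G k) - expdeg n p k\<bar> \<le> expdeg n p k / ln (expdeg n p k)}"
proof -
  define bad where
    "bad k = {G. expdeg n p k / ln (expdeg n p k) < \<bar>real (num_deg n G k) - expdeg n p k\<bar>}" for k
  have "measure_pmf.prob (Gnp n p) (\<Union>k\<in>{K0..K1}. bad k)
      \<le> (\<Sum>k\<in>{K0..K1}. measure_pmf.prob (Gnp n p) (bad k))"
    by (rule measure_pmf.finite_measure_subadditive_finite) auto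
  also have "\<dots> \<le> (\<Sum>k\<in>{K0..K1}. 16 / sqrt (expdeg n p k) + 2 * p * L\<^sup>2)"
  proof (rule sum_mono)
    fix k assume k: "k \<in> {K0..K1}"
    then have range: "K0 \<le> k" "real k \<le> L / 1000" using K1_le by (auto intro: order_trans[rotated])
    have "1 * expdeg n p K0 \<le> 4 ^ (k - K0) * expdeg n p K0" using assms by (intro mult_right_mono) auto
    then have "2 \<le> expdeg n p k" using expdeg_ge_geometric[OF range] assms by linarith
    then show "measure_pmf.prob (Gnp n p) (bad k) \<le> 16 / sqrt (expdeg n p k) + 2 * p * L\<^sup>2"
      using prob_deviation_le[OF range(2)] unfolding bad_def by blast
  qed
  also have "\<dots> \<le> 32 / sqrt (expdeg n p K0) + 4 * (L + 1) * L ^ 3 / real n"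
    using assms by (intro sum_deviation_bounds_le) auto
  finally have "measure_pmf.prob (Gnp n p) (\<Union>k\<in>{K0..K1}. bad k)
      \<le> 32 / sqrt (expdeg n p K0) + 4 * (L + 1) * L ^ 3 / real n" .
  moreover have "{G. \<forall>k\<in>{K0..K1}. \<bar>real (num_deg n G k) - expdeg n p k\<bar> \<le> expdeg n p k / ln (expdeg n p k)}
      = UNIV - (\<Union>k\<in>{K0..K1}. bad k)"
    unfolding bad_def by (auto simp: not_less)
  ultimately show ?thesis
    using measure_pmf.prob_compl[of "\<Union>k\<in>{K0..K1}. bad k" "Gnp n p"] by simp
qed

end

lemma eventually_log_density:
  fixes p :: "nat \<Rightarrow> real"
  assumes "\<epsilon> \<le> 1/2"
    and "\<forall>\<^sub>F n in sequentially. (1 - \<epsilon>) * ln (real n) \<le> real n * p n \<and>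
      real n * p n \<le> ln (real n) + ln (ln (real n))"
  shows "\<forall>\<^sub>F n in sequentially. log_density n (p n)"
proof -
  have "\<forall>\<^sub>F n in sequentially. 2 \<le> n" by (rule eventually_ge_at_top)
  moreover have "\<forall>\<^sub>F n :: nat in sequentially. 1 \<le> ln (real n)" by real_asymp
  moreover have "\<forall>\<^sub>F n :: nat in sequentially. ln (ln (real n)) \<le> ln (real n)" by real_asymp
  moreover have "\<forall>\<^sub>F n :: nat in sequentially. 2 * ln (real n) \<le> real n / 2" by real_asymp
  ultimately show ?thesis
    using assms(2)
  proof eventually_elim
    case (elim n)
    have "1/2 * ln (real n) \<le> (1 - \<epsilon>) * ln (real n)"
      using assms(1) elim by (intro mult_right_mono) auto
    show ?case
    proof
      show "2 \<le> n" "1 \<le> ln (real n)" "ln (real n) / 2 \<le> real n * p n"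
        "real n * p n \<le> 2 * ln (real n)" "ln (real n) / 1000 + 1 \<le> real n / 2"
        using elim \<open>1/2 * ln (real n) \<le> (1 - \<epsilon>) * ln (real n)\<close> by linarith+
      have "real n * p n \<le> real n * (1/2)" using elim by linarith
      then show "p n \<le> 1/2" using elim by simp
    qed
  qed
qed

lemma concentration_error_tendsto_0:
  assumes "filterlim \<mu> at_top sequentially"
  shows "(\<lambda>n. 32 / sqrt (\<mu> n) + 4 * (ln (real n) + 1) * ln (real n) ^ 3 / real n) \<longlonglongrightarrow> 0"
proof -
  have "filterlim (\<lambda>n. sqrt (\<mu> n)) at_top sequentially"
    by (rule filterlim_compose[OF sqrt_at_top assms])
  then have "(\<lambda>n. 32 / sqrt (\<mu> n)) \<longlonglongrightarrow> 0"
    by (intro tendsto_divide_0[OF tendsto_const] filterlim_at_top_imp_at_infinity)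
  moreover have "(\<lambda>n :: nat. 4 * (ln (real n) + 1) * ln (real n) ^ 3 / real n) \<longlonglongrightarrow> 0"
    by real_asymp
  ultimately show ?thesis using tendsto_add by fastforce
qed

theorem lemma4p13:
  shows "\<exists>\<epsilon>0 > (0::real). \<forall>\<epsilon>. 0 < \<epsilon> \<and> \<epsilon> < \<epsilon>0 \<longrightarrow>
    (\<forall>(p :: nat \<Rightarrow> real) (K0 :: nat \<Rightarrow> nat).
      (\<forall>\<^sub>F n in sequentially.
          (1 - \<epsilon>) * ln (real n) \<le> real n * p n \<and>
          real n * p n \<le> ln (real n) + ln (ln (real n))) \<longrightarrow>
      (\<forall>n. K0 n \<in> {0, 1, 2}) \<longrightarrow>
      filterlim (\<lambda>n. expdeg n (p n) (K0 n)) at_top sequentially \<longrightarrow>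
      ((\<lambda>n. measure_pmf.prob (Gnp n (p n))
          {G. \<forall>k \<in> {K0 n .. nat \<lfloor>ln (real n) / 10^3\<rfloor>}.
                \<bar>real (num_deg n G k) - expdeg n (p n) k\<bar>
                  \<le> expdeg n (p n) k / ln (expdeg n (p n) k)})
        \<longlonglongrightarrow> 1))"
proof (intro exI[of _ "1/2"] conjI allI impI)
  fix \<epsilon> :: real and p :: "nat \<Rightarrow> real" and K0 :: "nat \<Rightarrow> nat"
  assume "0 < \<epsilon> \<and> \<epsilon> < 1/2"
    and range: "\<forall>\<^sub>F n in sequentially. (1 - \<epsilon>) * ln (real n) \<le> real n * p n \<and>
      real n * p n \<le> ln (real n) + ln (ln (real n))"
    and lim: "filterlim (\<lambda>n. expdeg n (p n) (K0 n)) at_top sequentially"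
  let ?S = "\<lambda>n. {G. \<forall>k \<in> {K0 n .. nat \<lfloor>ln (real n) / 10^3\<rfloor>}.
      \<bar>real (num_deg n G k) - expdeg n (p n) k\<bar> \<le> expdeg n (p n) k / ln (expdeg n (p n) k)}"
  let ?err = "\<lambda>n. 32 / sqrt (expdeg n (p n) (K0 n)) + 4 * (ln (real n) + 1) * ln (real n) ^ 3 / real n"
  have "\<forall>\<^sub>F n in sequentially. log_density n (p n)"
    using \<open>0 < \<epsilon> \<and> \<epsilon> < 1/2\<close> range by (intro eventually_log_density) auto
  moreover have "\<forall>\<^sub>F n in sequentially. 2 \<le> expdeg n (p n) (K0 n)"
    using lim by (simp add: filterlim_at_top)
  ultimately have lower: "\<forall>\<^sub>F n in sequentially. 1 - ?err n \<le> measure_pmf.prob (Gnp n (p n)) (?S n)"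
    by eventually_elim (rule log_density.prob_num_deg_concentrated)
  have lower_lim: "(\<lambda>n. 1 - ?err n) \<longlonglongrightarrow> 1"
    using tendsto_diff[OF tendsto_const concentration_error_tendsto_0[OF lim]] by simp
  show "(\<lambda>n. measure_pmf.prob (Gnp n (p n)) (?S n)) \<longlonglongrightarrow> 1"
    by (rule tendsto_sandwich[OF lower _ lower_lim tendsto_const]) simp
qed simp

end
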